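(* In the setting described in the context, there exists $\varsigma^2=\mathcal O(R_\beta^2)$ such that for every $\beta$ with $\|\beta-\beta(0)\|_2\le R_\beta$, $$\mathbb E_{\mathrm{init},s,\mathrm d_{\mathcal S},\bar a,s',\mathrm d'_{\mathcal S},\bar a'}\|g_\beta(s,\mathrm d_{\mathcal S},\bar a,s',\mathrm d'_{\mathcal S},\bar a')-\bar g_\beta\|_2^2\le\varsigma^2.$$
   Context: $\mathcal S$ finite, $\mathcal P(\mathcal S)$ distributions $\mathrm d_{\mathcal S}$ on $\mathcal S$, $\overline{\mathcal A}$ finite. Triples $(s,x,\bar a)$ are vectors in $\mathbb R^d$ with $\|(s,x,\bar a)\|_2\le1$. Initialization: independent $u_j\sim\mathrm{Unif}\{\pm1\}$, $\beta_j(0)\sim\mathcal N(0,I_d/d)$, $j\in[m]$ ($\mathbb E_{\mathrm{init}}$ over it; $u$ fixed). $\sigma(y)=\max\{y,0\}$; $f_\beta(s,x,\bar a)=\frac1{\sqrt m}\sum_ju_j\sigma(\beta_j^\top(s,x,\bar a))$; $F_\beta(s,\mathrm d_{\mathcal S},\bar a)=\mathbb E_{x\sim\mathrm d_{\mathcal S}}f_\beta(s,x,\bar a)$; $\nabla_\beta$ uses $\sigma'(y)=\mathbb 1\{y>0\}$. Data: transition kernel $\mathbb P(s',\mathrm d'_{\mathcal S}\mid s,\mathrm d_{\mathcal S},\bar a)$, policy $\pi$, distribution $\rho$ on $(s,\mathrm d_{\mathcal S},\bar a)$; sample $(s,\mathrm d_{\mathcal S},\bar a)\sim\rho$, $(s',\mathrm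 d'_{\mathcal S})\sim\mathbb P(\cdot\mid s,\mathrm d_{\mathcal S},\bar a)$, $\bar a'\sim\pi(\cdot\mid s',\mathrm d'_{\mathcal S})$. Function $\xi$, constants $\tau\ge0$, $\mu\in[0,1)$. $\delta_\beta=F_\beta(s,\mathrm d_{\mathcal S},\bar a)-\tau\xi(s,\mathrm d_{\mathcal S},\bar a)-\mu F_\beta(s',\mathrm d'_{\mathcal S},\bar a')$, $g_\beta=\delta_\beta\nabla_\beta F_\beta(s,\mathrm d_{\mathcal S},\bar a)$, $\bar g_\beta=\mathbb E g_\beta$. Assumption 4: constants $\tau_1,\tau_2,\tau_3\ge0$ with $\xi(s,\mathrm d_{\mathcal S},\bar a)^2\le\tau_1\mathbb E_{x\sim\mathrm d_{\mathcal S}}(f_{\beta(0)}(s,x,\bar a))^2+\tau_2R_\beta^2+\tau_3$ for all arguments. $\mathcal O(\cdot)$ hides constants independent of $R_\beta$ and $m$. *)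

theory Defs
  imports "HOL-Probability.Probability"
begin

text \<open>Vectors in R^d are functions 'd => real ('d finite, d = CARD('d)).
  Distributions on the finite state set 'S are probability vectors 'S => real.
  Parameters beta = (beta_j)_{j<m} are functions nat => 'd => real (only j < m matters).\<close>

definition in_simplex :: "('s::finite \<Rightarrow> real) \<Rightarrow> bool" where
  "in_simplex d \<longleftrightarrow> (\<forall>x. 0 \<le> d x) \<and> (\<Sum>x\<in>UNIV. d x) = 1"

definition inner_d :: "('d::finite \<Rightarrow> real) \<Rightarrow> ('d \<Rightarrow> real) \<Rightarrow> real" where
  "inner_d v w = (\<Sum>i\<in>UNIV. v i * w i)"

definition relu :: "real \<Rightarrow> real" where
  "relu y = max y 0"

definition fnet :: "nat \<Rightarrow> (nat \<Rightarrow> real) \<Rightarrow> (nat \<Rightarrow> 'd::finite \<Rightarrow> real) \<Rightarrow> ('d \<Rightarrow> real) \<Rightarrow> real" where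
  "fnet m u b z = (1 / sqrt (real m)) * (\<Sum>j<m. u j * relu (inner_d (b j) z))"

text \<open>F_beta(s, d_S, a) = E_{x ~ d_S} f_beta(s,x,a); phi embeds triples (s,x,a) into R^d.\<close>
definition Fnet :: "('s::finite \<Rightarrow> 's \<Rightarrow> 'a \<Rightarrow> 'd::finite \<Rightarrow> real) \<Rightarrow> nat \<Rightarrow> (nat \<Rightarrow> real)
    \<Rightarrow> (nat \<Rightarrow> 'd \<Rightarrow> real) \<Rightarrow> 's \<Rightarrow> ('s \<Rightarrow> real) \<Rightarrow> 'a \<Rightarrow> real" where
  "Fnet \<phi> m u b s d a = (\<Sum>x\<in>UNIV. d x * fnet m u b (\<phi> s x a))"

text \<open>Component (j,i) of nabla_beta F_beta(s,d_S,a), using sigma'(y) = 1{y>0}.\<close>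
definition gradF :: "('s::finite \<Rightarrow> 's \<Rightarrow> 'a \<Rightarrow> 'd::finite \<Rightarrow> real) \<Rightarrow> nat \<Rightarrow> (nat \<Rightarrow> real)
    \<Rightarrow> (nat \<Rightarrow> 'd \<Rightarrow> real) \<Rightarrow> 's \<Rightarrow> ('s \<Rightarrow> real) \<Rightarrow> 'a \<Rightarrow> nat \<Rightarrow> 'd \<Rightarrow> real" where
  "gradF \<phi> m u b s d a j i =
     (\<Sum>x\<in>UNIV. d x * ((1 / sqrt (real m)) * u j *
        (if inner_d (b j) (\<phi> s x a) > 0 then 1 else 0) * \<phi> s x a i))"

definition tdelta :: "('s::finite \<Rightarrow> 's \<Rightarrow> 'a \<Rightarrow> 'd::finite \<Rightarrow> real) \<Rightarrow> real \<Rightarrow> real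
    \<Rightarrow> ('s \<times> ('s \<Rightarrow> real) \<times> 'a \<Rightarrow> real) \<Rightarrow> nat \<Rightarrow> (nat \<Rightarrow> real) \<Rightarrow> (nat \<Rightarrow> 'd \<Rightarrow> real)
    \<Rightarrow> ('s \<times> ('s \<Rightarrow> real) \<times> 'a) \<times> ('s \<times> ('s \<Rightarrow> real) \<times> 'a) \<Rightarrow> real" where
  "tdelta \<phi> \<tau> \<mu> \<xi> m u b z =
     (case z of ((s, d, a), (s', d', a')) \<Rightarrow>
        Fnet \<phi> m u b s d a - \<tau> * \<xi> (s, d, a) - \<mu> * Fnet \<phi> m u b s' d' a')"

definition gvec :: "('s::finite \<Rightarrow> 's \<Rightarrow> 'a \<Rightarrow> 'd::finite \<Rightarrow> real) \<Rightarrow> real \<Rightarrow> real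
    \<Rightarrow> ('s \<times> ('s \<Rightarrow> real) \<times> 'a \<Rightarrow> real) \<Rightarrow> nat \<Rightarrow> (nat \<Rightarrow> real) \<Rightarrow> (nat \<Rightarrow> 'd \<Rightarrow> real)
    \<Rightarrow> ('s \<times> ('s \<Rightarrow> real) \<times> 'a) \<times> ('s \<times> ('s \<Rightarrow> real) \<times> 'a) \<Rightarrow> nat \<Rightarrow> 'd \<Rightarrow> real" where
  "gvec \<phi> \<tau> \<mu> \<xi> m u b z j i =
     (case z of ((s, d, a), _) \<Rightarrow> tdelta \<phi> \<tau> \<mu> \<xi> m u b z * gradF \<phi> m u b s d a j i)"

definition triple_space :: "('s::finite \<times> ('s \<Rightarrow> real) \<times> 'a::finite) measure" where
  "triple_space = count_space UNIV \<Otimes>\<^sub>M (borel \<Otimes>\<^sub>M count_space UNIV)"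

definition sd_space :: "('s::finite \<times> ('s \<Rightarrow> real)) measure" where
  "sd_space = count_space UNIV \<Otimes>\<^sub>M borel"

definition data_measure :: "('s::finite \<times> ('s \<Rightarrow> real) \<times> 'a::finite) measure
    \<Rightarrow> ('s \<times> ('s \<Rightarrow> real) \<times> 'a \<Rightarrow> ('s \<times> ('s \<Rightarrow> real)) measure)
    \<Rightarrow> ('s \<times> ('s \<Rightarrow> real) \<Rightarrow> 'a measure)
    \<Rightarrow> (('s \<times> ('s \<Rightarrow> real) \<times> 'a) \<times> ('s \<times> ('s \<Rightarrow> real) \<times> 'a)) measure" where
  "data_measure \<rho> P \<pi> =
     \<rho> \<bind> (\<lambda>t. P t \<bind> (\<lambda>(s', d'). \<pi> (s', d') \<bind>
        (\<lambda>a'. return (triple_space \<Otimes>\<^sub>M triple_space) (t, (s', d', a')))))"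

definition gbar where
  "gbar \<phi> \<tau> \<mu> \<xi> m u b D j i = (\<integral>z. gvec \<phi> \<tau> \<mu> \<xi> m u b z j i \<partial>D)"

definition par_sqnorm :: "nat \<Rightarrow> (nat \<Rightarrow> 'd::finite \<Rightarrow> real) \<Rightarrow> real" where
  "par_sqnorm m v = (\<Sum>j<m. \<Sum>i\<in>UNIV. (v j i)\<^sup>2)"

definition gauss_init :: "('d::finite \<Rightarrow> real) measure" where
  "gauss_init = PiM UNIV (\<lambda>_::'d. density lborel (normal_density 0 (1 / sqrt (real CARD('d)))))"

definition init_measure :: "nat \<Rightarrow> ((nat \<Rightarrow> real) \<times> (nat \<Rightarrow> 'd::finite \<Rightarrow> real)) measure" where
  "init_measure m =
     PiM {..<m} (\<lambda>_. measure_pmf (pmf_of_set {-1, 1::real})) \<Otimes>\<^sub>M PiM {..<m} (\<lambda>_. gauss_init)"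

end

(*
  For a fixed initialization everything is bounded pointwise on the support of the data, where
  d_S and d'_S are probability vectors: F_beta is a convex combination of values of f_beta, every
  entry of nabla_beta F_beta has modulus at most 1/sqrt m, and Assumption 4 taken at the zero
  network bounds xi^2 by tau_2 R^2 + tau_3 =: X. Hence each of the m d entries of g_beta is at
  most 3 (2 T + tau^2 X) / m in square, where T bounds sum_x f_beta(s,x,a)^2, and so
  |g_beta - gbar_beta|^2 <= 12 d (2 T + tau^2 X).

  Since ReLU is 1-Lipschitz, |f_beta - f_beta(0)| <= |beta - beta(0)| <= R at unit feature
  vectors, so T <= 2 E + 2 |S| R^2 with E the total squared output of the initial network over
  all feature vectors. Finally, the signs u_j are orthonormal in L^2 and every Gaussian weight
  has second moment 1/d, so E_init f_beta(0)(z)^2 <= |z|^2 <= 1 and E_init E <= |S|^2 |A|.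
  The resulting constant does not depend on m.
*)

theory Submission
  imports Defs
begin

lemma abs_le_1_of_sum_squares_le_1:
  fixes v :: "'d::finite \<Rightarrow> real"
  assumes "(\<Sum>i\<in>UNIV. (v i)\<^sup>2) \<le> 1"
  shows "\<bar>v i\<bar> \<le> 1"
proof -
  have "(v i)\<^sup>2 \<le> (\<Sum>i\<in>UNIV. (v i)\<^sup>2)" by (rule member_le_sum) auto
  with assms have "(v i)\<^sup>2 \<le> 1" by linarith
  then show ?thesis by (simp add: abs_square_le_1)
qed

lemma sq_add_le: "((x::real) + y)\<^sup>2 \<le> 2 * x\<^sup>2 + 2 * y\<^sup>2"
proof -
  have "2 * x\<^sup>2 + 2 * y\<^sup>2 - (x + y)\<^sup>2 = (x - y)\<^sup>2" by (simp add: power2_eq_square algebra_simps)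
  then show ?thesis by (metis diff_ge_0_iff_ge zero_le_power2)
qed

lemma sq_diff_diff_le: "((x::real) - y - w)\<^sup>2 \<le> 3 * (x\<^sup>2 + y\<^sup>2 + w\<^sup>2)"
proof -
  have "3 * (x\<^sup>2 + y\<^sup>2 + w\<^sup>2) - (x - y - w)\<^sup>2 = (x + y)\<^sup>2 + (x + w)\<^sup>2 + (y - w)\<^sup>2"
    by (simp add: power2_eq_square algebra_simps)
  then show ?thesis by (metis add_nonneg_nonneg diff_ge_0_iff_ge zero_le_power2)
qed

lemma abs_simplex_average_le:
  assumes d: "in_simplex d" and f: "\<And>x. \<bar>f x\<bar> \<le> c"
  shows "\<bar>\<Sum>x\<in>UNIV. d x * f x\<bar> \<le> c"
proof -
  have "\<bar>\<Sum>x\<in>UNIV. d x * f x\<bar> \<le> (\<Sum>x\<in>UNIV. d x * c)"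
    using d f by (intro order_trans[OF sum_abs] sum_mono) (auto simp: in_simplex_def abs_mult mult_left_mono)
  also have "\<dots> = c" using d by (simp add: in_simplex_def sum_distrib_right[symmetric])
  finally show ?thesis .
qed

lemma simplex_average_sq_le:
  assumes d: "in_simplex d"
  shows "(\<Sum>x\<in>UNIV. d x * f x)\<^sup>2 \<le> (\<Sum>x\<in>UNIV. (f x)\<^sup>2)"
proof -
  have d_le_1: "d x \<le> 1" for x
    using d member_le_sum[of x UNIV d] by (auto simp: in_simplex_def)
  have "(\<Sum>x\<in>UNIV. (d x)\<^sup>2) \<le> (\<Sum>x\<in>UNIV. d x)"
    using d d_le_1 by (intro sum_mono) (auto simp: in_simplex_def power2_eq_square mult_left_le)
  then have "(\<Sum>x\<in>UNIV. (d x)\<^sup>2) \<le> 1" using d by (simp add: in_simplex_def)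
  then have "(\<Sum>x\<in>UNIV. (d x)\<^sup>2) * (\<Sum>x\<in>UNIV. (f x)\<^sup>2) \<le> (\<Sum>x\<in>UNIV. (f x)\<^sup>2)"
    by (simp add: mult_left_le_one_le sum_nonneg)
  with Cauchy_Schwarz_ineq_sum[of d f UNIV] show ?thesis by linarith
qed

lemma inner_d_sq_le:
  assumes "(\<Sum>i\<in>UNIV. (v i)\<^sup>2) \<le> 1"
  shows "(inner_d x v)\<^sup>2 \<le> (\<Sum>i\<in>UNIV. (x i)\<^sup>2)"
proof -
  have "(inner_d x v)\<^sup>2 \<le> (\<Sum>i\<in>UNIV. (x i)\<^sup>2) * (\<Sum>i\<in>UNIV. (v i)\<^sup>2)"
    unfolding inner_d_def by (rule Cauchy_Schwarz_ineq_sum)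
  also have "\<dots> \<le> (\<Sum>i\<in>UNIV. (x i)\<^sup>2)"
    using assms by (simp add: mult_left_le sum_nonneg)
  finally show ?thesis .
qed

lemma inner_d_diff_left: "inner_d x v - inner_d y v = inner_d (\<lambda>i. x i - y i) v"
  by (simp add: inner_d_def sum_subtractf left_diff_distrib)

lemma abs_relu_diff_le: "\<bar>relu a - relu b\<bar> \<le> \<bar>a - b\<bar>"
  unfolding relu_def by auto

lemma relu_sq_le: "(relu y)\<^sup>2 \<le> y\<^sup>2"
  unfolding relu_def by (simp add: max_def)

section \<open>The semi-gradient for a fixed network\<close>

lemma gradF_sq_le:
  fixes \<phi> :: "'s::finite \<Rightarrow> 's \<Rightarrow> 'a \<Rightarrow> 'd::finite \<Rightarrow> real"
  assumes feat: "\<And>s x a. (\<Sum>i\<in>UNIV. (\<phi> s x a i)\<^sup>2) \<le> 1"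
    and d: "in_simplex d" and u: "\<bar>u j\<bar> \<le> 1"
  shows "(gradF \<phi> m u b s d a j i)\<^sup>2 \<le> 1 / real m"
proof -
  have "\<bar>gradF \<phi> m u b s d a j i\<bar> \<le> 1 / sqrt (real m)"
    unfolding gradF_def
  proof (rule abs_simplex_average_le[OF d])
    fix x
    let ?t = "u j * (if 0 < inner_d (b j) (\<phi> s x a) then 1 else 0) * \<phi> s x a i"
    have "\<bar>?t\<bar> \<le> 1"
      using u abs_le_1_of_sum_squares_le_1[OF feat[of s x a], of i]
      by (auto simp: abs_mult intro: mult_le_one)
    moreover have "\<bar>1 / sqrt (real m) * u j * (if 0 < inner_d (b j) (\<phi> s x a) then 1 else 0) * \<phi> s x a i\<bar>
        = \<bar>?t\<bar> / sqrt (real m)"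
      by (simp add: abs_mult)
    ultimately show "\<bar>1 / sqrt (real m) * u j * (if 0 < inner_d (b j) (\<phi> s x a) then 1 else 0) * \<phi> s x a i\<bar>
        \<le> 1 / sqrt (real m)"
      by (simp add: divide_right_mono)
  qed
  then show ?thesis
    using power_mono[of _ _ 2] by (fastforce simp: power_divide)
qed

lemma fnet_param_diff_sq_le:
  fixes v :: "'d::finite \<Rightarrow> real"
  assumes u: "\<forall>j<m. \<bar>u j\<bar> \<le> 1" and v: "(\<Sum>i\<in>UNIV. (v i)\<^sup>2) \<le> 1"
  shows "(fnet m u B v - fnet m u b v)\<^sup>2 \<le> par_sqnorm m (\<lambda>j i. B j i - b j i)"
proof -
  define e where "e j = \<bar>inner_d (\<lambda>i. B j i - b j i) v\<bar>" for j
  have diff: "fnet m u B v - fnet m u b v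
      = (\<Sum>j<m. u j * (relu (inner_d (B j) v) - relu (inner_d (b j) v))) / sqrt (real m)"
    by (simp add: fnet_def sum_subtractf right_diff_distrib diff_divide_distrib)
  have sum_le: "\<bar>\<Sum>j<m. u j * (relu (inner_d (B j) v) - relu (inner_d (b j) v))\<bar> \<le> (\<Sum>j<m. e j)"
  proof (intro order_trans[OF sum_abs] sum_mono)
    fix j assume "j \<in> {..<m}"
    with u have "\<bar>u j\<bar> \<le> 1" by auto
    moreover have "\<bar>relu (inner_d (B j) v) - relu (inner_d (b j) v)\<bar> \<le> e j"
      unfolding e_def inner_d_diff_left[symmetric] by (rule abs_relu_diff_le)
    ultimately show "\<bar>u j * (relu (inner_d (B j) v) - relu (inner_d (b j) v))\<bar> \<le> e j"
      using mult_mono[of "\<bar>u j\<bar>" 1] by (simp add: abs_mult)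
  qed
  have "(fnet m u B v - fnet m u b v)\<^sup>2 \<le> (\<Sum>j<m. e j)\<^sup>2 / real m"
    unfolding diff using power_mono[OF sum_le abs_ge_zero, of 2]
    by (simp add: power_divide divide_right_mono)
  also have "\<dots> \<le> (\<Sum>j<m. (e j)\<^sup>2)"
    using Cauchy_Schwarz_ineq_sum[of "\<lambda>_. 1" e "{..<m}"]
    by (cases "m = 0") (auto simp: field_simps)
  also have "\<dots> \<le> par_sqnorm m (\<lambda>j i. B j i - b j i)"
    unfolding par_sqnorm_def e_def
    using inner_d_sq_le[OF v] by (intro sum_mono) simp
  finally show ?thesis .
qed

lemma fnet_sq_le_param_shift:
  fixes v :: "'d::finite \<Rightarrow> real"
  assumes u: "\<forall>j<m. \<bar>u j\<bar> \<le> 1" and v: "(\<Sum>i\<in>UNIV. (v i)\<^sup>2) \<le> 1"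
  shows "(fnet m u B v)\<^sup>2 \<le> 2 * (fnet m u b v)\<^sup>2 + 2 * par_sqnorm m (\<lambda>j i. B j i - b j i)"
  using sq_add_le[of "fnet m u b v" "fnet m u B v - fnet m u b v"] fnet_param_diff_sq_le[OF u v, of B b]
  by simp

lemma (in subprob_space) abs_integral_le_const:
  fixes f :: "_ \<Rightarrow> real"
  assumes bound: "AE x in M. \<bar>f x\<bar> \<le> c" and c: "0 \<le> c"
  shows "\<bar>\<integral>x. f x \<partial>M\<bar> \<le> c"
proof (cases "integrable M f")
  case True
  have "\<bar>\<integral>x. f x \<partial>M\<bar> \<le> (\<integral>x. \<bar>f x\<bar> \<partial>M)" by (rule integral_abs_bound)
  also have "\<dots> \<le> (\<integral>x. c \<partial>M)"
    using True bound by (intro integral_mono_AE) auto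
  also have "\<dots> \<le> c" using c subprob_measure_le_1[of "space M"] by (simp add: mult_left_le_one_le)
  finally show ?thesis .
next
  case False
  with c show ?thesis by (simp add: not_integrable_integral_eq)
qed

(* No measurability of g is needed: a non-integrable component has Bochner mean 0, which still
   obeys abs_integral_le_const. *)
lemma nn_integral_par_sqnorm_centered_le:
  fixes g :: "'z \<Rightarrow> nat \<Rightarrow> 'd::finite \<Rightarrow> real"
  assumes D: "subprob_space D" and c: "0 \<le> c"
    and g: "AE z in D. \<forall>j<m. \<forall>i. (g z j i)\<^sup>2 \<le> c"
  shows "(\<integral>\<^sup>+ z. ennreal (par_sqnorm m (\<lambda>j i. g z j i - (\<integral>z'. g z' j i \<partial>D))) \<partial>D)
    \<le> ennreal (4 * real m * real CARD('d) * c)"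
proof -
  interpret subprob_space D by (rule D)
  have mean: "(\<integral>z. g z j i \<partial>D)\<^sup>2 \<le> c" if "j < m" for j i
  proof -
    have "AE z in D. \<bar>g z j i\<bar> \<le> sqrt c"
      using g by eventually_elim (use that in \<open>auto intro: real_le_rsqrt\<close>)
    then have "\<bar>\<integral>z. g z j i \<partial>D\<bar> \<le> sqrt c"
      using c by (intro abs_integral_le_const) auto
    then show ?thesis using c power_mono[OF _ abs_ge_zero, of _ "sqrt c" 2] by simp
  qed
  have "AE z in D. ennreal (par_sqnorm m (\<lambda>j i. g z j i - (\<integral>z'. g z' j i \<partial>D)))
      \<le> ennreal (4 * real m * real CARD('d) * c)"
    using g
  proof eventually_elim
    case (elim z)
    have "(g z j i - (\<integral>z'. g z' j i \<partial>D))\<^sup>2 \<le> 4 * c" if "j < m" for j i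
    proof -
      have "(g z j i)\<^sup>2 \<le> c" using elim that by blast
      then show ?thesis
        using sq_add_le[of "g z j i" "- (\<integral>z'. g z' j i \<partial>D)"] mean[OF that, of i] by simp
    qed
    then have "par_sqnorm m (\<lambda>j i. g z j i - (\<integral>z'. g z' j i \<partial>D)) \<le> (\<Sum>j<m. \<Sum>i\<in>(UNIV::'d set). 4 * c)"
      unfolding par_sqnorm_def by (intro sum_mono) simp
    then show ?case by (simp add: ennreal_leI)
  qed
  then show ?thesis by (intro nn_integral_le_const) simp_all
qed

lemma tdelta_sq_le:
  fixes \<phi> :: "'s::finite \<Rightarrow> 's \<Rightarrow> 'a \<Rightarrow> 'd::finite \<Rightarrow> real"
  assumes d: "in_simplex d" and d': "in_simplex d'"
    and T: "\<And>s a. (\<Sum>x\<in>UNIV. (fnet m u b (\<phi> s x a))\<^sup>2) \<le> T"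
    and xi: "(\<xi> (s, d, a))\<^sup>2 \<le> X" and mu: "\<bar>\<mu>\<bar> \<le> 1"
  shows "(tdelta \<phi> \<tau> \<mu> \<xi> m u b ((s, d, a), (s', d', a')))\<^sup>2 \<le> 3 * (2 * T + \<tau>\<^sup>2 * X)"
proof -
  let ?F = "Fnet \<phi> m u b s d a" and ?F' = "Fnet \<phi> m u b s' d' a'"
  have F: "?F\<^sup>2 \<le> T" and F': "?F'\<^sup>2 \<le> T"
    unfolding Fnet_def
    by (rule order_trans[OF simplex_average_sq_le[OF d] T],
        rule order_trans[OF simplex_average_sq_le[OF d'] T])
  have "(\<mu> * ?F')\<^sup>2 \<le> ?F'\<^sup>2"
    using mu by (simp add: power_mult_distrib abs_square_le_1 mult_left_le_one_le)
  moreover have "(\<tau> * \<xi> (s, d, a))\<^sup>2 \<le> \<tau>\<^sup>2 * X"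
    using xi by (simp add: power_mult_distrib mult_left_mono)
  ultimately have "?F\<^sup>2 + (\<tau> * \<xi> (s, d, a))\<^sup>2 + (\<mu> * ?F')\<^sup>2 \<le> 2 * T + \<tau>\<^sup>2 * X"
    using F F' by linarith
  then show ?thesis
    using sq_diff_diff_le[of ?F "\<tau> * \<xi> (s, d, a)" "\<mu> * ?F'"] by (simp add: tdelta_def)
qed

lemma gvec_sq_le:
  fixes \<phi> :: "'s::finite \<Rightarrow> 's \<Rightarrow> 'a \<Rightarrow> 'd::finite \<Rightarrow> real"
  assumes feat: "\<And>s x a. (\<Sum>i\<in>UNIV. (\<phi> s x a i)\<^sup>2) \<le> 1"
    and d: "in_simplex d" and d': "in_simplex d'"
    and T: "\<And>s a. (\<Sum>x\<in>UNIV. (fnet m u b (\<phi> s x a))\<^sup>2) \<le> T"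
    and xi: "(\<xi> (s, d, a))\<^sup>2 \<le> X" and mu: "\<bar>\<mu>\<bar> \<le> 1" and u: "\<bar>u j\<bar> \<le> 1"
  shows "(gvec \<phi> \<tau> \<mu> \<xi> m u b ((s, d, a), (s', d', a')) j i)\<^sup>2 \<le> 3 * (2 * T + \<tau>\<^sup>2 * X) / real m"
proof -
  have "(tdelta \<phi> \<tau> \<mu> \<xi> m u b ((s, d, a), (s', d', a')))\<^sup>2 * (gradF \<phi> m u b s d a j i)\<^sup>2
      \<le> 3 * (2 * T + \<tau>\<^sup>2 * X) * (1 / real m)"
    using tdelta_sq_le[where \<phi> = \<phi> and m = m and u = u and b = b and \<xi> = \<xi>, OF d d' T xi mu]
      gradF_sq_le[where \<phi> = \<phi> and u = u and j = j, OF feat d u]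
    by (intro mult_mono) (auto intro: order_trans[OF zero_le_power2])
  then show ?thesis by (simp add: gvec_def power_mult_distrib)
qed

lemma nn_integral_centered_gvec_le:
  fixes \<phi> :: "'s::finite \<Rightarrow> 's \<Rightarrow> 'a::finite \<Rightarrow> 'd::finite \<Rightarrow> real"
    and D :: "(('s \<times> ('s \<Rightarrow> real) \<times> 'a) \<times> ('s \<times> ('s \<Rightarrow> real) \<times> 'a)) measure"
  assumes feat: "\<And>s x a. (\<Sum>i\<in>UNIV. (\<phi> s x a i)\<^sup>2) \<le> 1"
    and D: "subprob_space D"
    and D_simplex: "AE z in D. in_simplex (fst (snd (fst z))) \<and> in_simplex (fst (snd (snd z)))"
    and T: "\<And>s a. (\<Sum>x\<in>UNIV. (fnet m u b (\<phi> s x a))\<^sup>2) \<le> T" and T_nonneg: "0 \<le> T"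
    and xi: "\<And>s d a. in_simplex d \<Longrightarrow> (\<xi> (s, d, a))\<^sup>2 \<le> X" and X_nonneg: "0 \<le> X"
    and mu: "\<bar>\<mu>\<bar> \<le> 1" and u: "\<forall>j<m. \<bar>u j\<bar> \<le> 1"
  shows "(\<integral>\<^sup>+ z. ennreal (par_sqnorm m (\<lambda>j i.
              gvec \<phi> \<tau> \<mu> \<xi> m u b z j i - gbar \<phi> \<tau> \<mu> \<xi> m u b D j i)) \<partial>D)
    \<le> ennreal (12 * real CARD('d) * (2 * T + \<tau>\<^sup>2 * X))"
proof -
  define K where "K = 3 * (2 * T + \<tau>\<^sup>2 * X)"
  have "AE z in D. \<forall>j<m. \<forall>i. (gvec \<phi> \<tau> \<mu> \<xi> m u b z j i)\<^sup>2 \<le> K / real m"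
    using D_simplex
  proof eventually_elim
    case (elim z)
    obtain s d a s' d' a' where z: "z = ((s, d, a), (s', d', a'))" by (metis prod.exhaust)
    with elim have d: "in_simplex d" and d': "in_simplex d'" by simp_all
    show ?case
      using gvec_sq_le[where \<phi> = \<phi> and m = m and u = u and b = b and \<xi> = \<xi>, OF feat d d' T xi[OF d] mu] u
      unfolding z K_def by simp
  qed
  then have "(\<integral>\<^sup>+ z. ennreal (par_sqnorm m (\<lambda>j i.
              gvec \<phi> \<tau> \<mu> \<xi> m u b z j i - gbar \<phi> \<tau> \<mu> \<xi> m u b D j i)) \<partial>D)
      \<le> ennreal (4 * real m * real CARD('d) * (K / real m))"
    unfolding gbar_def using T_nonneg X_nonneg
    by (intro nn_integral_par_sqnorm_centered_le[OF D]) (simp_all add: K_def)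
  also have "\<dots> \<le> ennreal (12 * real CARD('d) * (2 * T + \<tau>\<^sup>2 * X))"
    using T_nonneg X_nonneg by (intro ennreal_leI) (cases "m = 0", simp_all add: K_def)
  finally show ?thesis .
qed

section \<open>Second moments at initialization\<close>

abbreviation sign_init :: "nat \<Rightarrow> (nat \<Rightarrow> real) measure" where
  "sign_init m \<equiv> PiM {..<m} (\<lambda>_. measure_pmf (pmf_of_set {-1, 1::real}))"

abbreviation gauss_weights :: "nat \<Rightarrow> (nat \<Rightarrow> 'd::finite \<Rightarrow> real) measure" where
  "gauss_weights m \<equiv> PiM {..<m} (\<lambda>_. gauss_init)"

lemma has_bochner_integral_PiM_component:
  fixes f :: "'a \<Rightarrow> 'b::{banach, second_countable_topology}"
  assumes M: "\<And>i. i \<in> I \<Longrightarrow> prob_space (M i)" and i: "i \<in> I"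
    and f: "has_bochner_integral (M i) f x"
  shows "has_bochner_integral (PiM I M) (\<lambda>\<omega>. f (\<omega> i)) x"
proof -
  have comp: "(\<lambda>\<omega>. \<omega> i) \<in> measurable (PiM I M) (M i)"
    using i by (rule measurable_component_singleton)
  have f_meas: "f \<in> borel_measurable (M i)"
    using f by (auto simp: has_bochner_integral_iff intro: borel_measurable_integrable)
  have "has_bochner_integral (distr (PiM I M) (M i) (\<lambda>\<omega>. \<omega> i)) f x"
    using f distr_PiM_component[where I = I and M = M, OF M i] by simp
  then show ?thesis
    by (simp add: has_bochner_integral_iff integrable_distr_eq[OF comp f_meas] integral_distr[OF comp f_meas])
qed

lemma has_bochner_integral_normal_sq:
  assumes "0 < \<sigma>"
  shows "has_bochner_integral (density lborel (normal_density 0 \<sigma>)) (\<lambda>x. x\<^sup>2) (\<sigma>\<^sup>2)"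
proof (rule has_bochner_integral_density)
  show "has_bochner_integral lborel (\<lambda>x. normal_density 0 \<sigma> x *\<^sub>R x\<^sup>2) (\<sigma>\<^sup>2)"
    using normal_moment_even[where k = 1 and \<mu> = 0, OF assms] assms by (simp add: power2_eq_square)
qed auto

lemma prob_space_gauss_init: "prob_space gauss_init"
  unfolding gauss_init_def by (intro prob_space_PiM prob_space_normal_density) simp

lemma has_bochner_integral_gauss_init_sq:
  "has_bochner_integral (gauss_init :: ('d::finite \<Rightarrow> real) measure) (\<lambda>x. (x i)\<^sup>2) (1 / real CARD('d))"
proof -
  have \<sigma>: "0 < 1 / sqrt (real CARD('d))" by simp
  show ?thesis
    unfolding gauss_init_def
    by (rule has_bochner_integral_PiM_component[where f = "\<lambda>x. x\<^sup>2",
          OF prob_space_normal_density[OF \<sigma>] UNIV_I])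
      (use has_bochner_integral_normal_sq[OF \<sigma>] in \<open>simp add: power_divide\<close>)
qed

lemma has_bochner_integral_gauss_weights_sq:
  "j < m \<Longrightarrow> has_bochner_integral (gauss_weights m :: (nat \<Rightarrow> 'd::finite \<Rightarrow> real) measure)
     (\<lambda>b. (b j i)\<^sup>2) (1 / real CARD('d))"
  by (rule has_bochner_integral_PiM_component[OF prob_space_gauss_init _ has_bochner_integral_gauss_init_sq])
    auto

lemma has_bochner_integral_sign_init_mult:
  assumes j: "j < m" and k: "k < m"
  shows "has_bochner_integral (sign_init m) (\<lambda>u. u j * u k) (if j = k then 1 else 0)"
proof -
  interpret product_prob_space "\<lambda>_::nat. measure_pmf (pmf_of_set {-1, 1::real})" "{..<m}"
    by unfold_locales
  \<comment> \<open>u j * u k as a product over all coordinates, so that its integral factorizes\<close>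
  define f where "f i x = (if i = j then x else 1) * (if i = k then x else (1::real))" for i x
  have f_int: "integrable (measure_pmf (pmf_of_set {-1, 1::real})) (f i)" for i
    by (rule integrable_measure_pmf_finite) simp
  have prod_f: "(\<Prod>i<m. f i (u i)) = u j * u k" for u
    using j k by (simp add: f_def prod.distrib prod.delta)
  have "(\<Prod>i<m. \<integral>x. f i x \<partial>measure_pmf (pmf_of_set {-1, 1::real})) = (\<Prod>i<m. (f i (-1) + f i 1) / 2)"
    by (simp add: integral_pmf_of_set)
  also have "\<dots> = (if j = k then 1 else 0)"
  proof (cases "j = k")
    case True
    then have "(f i (-1) + f i 1) / 2 = 1" for i by (simp add: f_def)
    with True show ?thesis by simp
  next
    case False
    with j have "\<exists>i<m. (f i (-1) + f i 1) / 2 = 0" by (auto simp: f_def)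
    with False show ?thesis by (auto intro: prod_zero)
  qed
  finally show ?thesis
    using product_integrable_prod[of "{..<m}" f] product_integral_prod[of "{..<m}" f]
    by (simp add: has_bochner_integral_iff f_int prod_f)
qed

lemma nn_integral_sign_init_sum_sq:
  "(\<integral>\<^sup>+ u. ennreal ((\<Sum>j<m. u j * c j)\<^sup>2) \<partial>sign_init m) = ennreal (\<Sum>j<m. (c j)\<^sup>2)"
proof -
  have expand: "(\<Sum>j<m. u j * c j)\<^sup>2 = (\<Sum>j<m. \<Sum>k<m. c j * c k * (u j * u k))" for u :: "nat \<Rightarrow> real"
    by (simp add: power2_eq_square sum_product algebra_simps)
  have "has_bochner_integral (sign_init m) (\<lambda>u. \<Sum>j<m. \<Sum>k<m. c j * c k * (u j * u k))
      (\<Sum>j<m. \<Sum>k<m. c j * c k * (if j = k then 1 else 0))"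
    by (intro has_bochner_integral_sum has_bochner_integral_mult_right has_bochner_integral_sign_init_mult)
      auto
  moreover have "(\<Sum>j<m. \<Sum>k<m. c j * c k * (if j = k then 1 else 0)) = (\<Sum>j<m. (c j)\<^sup>2)"
    by (simp add: power2_eq_square if_distrib cong: if_cong)
  ultimately show ?thesis
    unfolding expand by (subst nn_integral_eq_integral) (auto simp: has_bochner_integral_iff expand[symmetric])
qed

lemma borel_measurable_PiM_apply:
  assumes "j \<in> I \<Longrightarrow> f \<in> borel_measurable (M j)"
  shows "(\<lambda>x. f (x j)) \<in> borel_measurable (PiM I M)"
proof (cases "j \<in> I")
  case True
  with assms show ?thesis by (intro measurable_compose[OF measurable_component_singleton]) auto
next
  case False
  then have "(\<lambda>x. f (x j)) \<in> borel_measurable (PiM I M) \<longleftrightarrow> (\<lambda>x. f undefined) \<in> borel_measurable (PiM I M)"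
    by (intro measurable_cong) (auto simp: space_PiM PiE_def extensional_def)
  then show ?thesis by simp
qed

lemma sign_init_apply_measurable[measurable]: "(\<lambda>u. u j) \<in> borel_measurable (sign_init m)"
  by (rule borel_measurable_PiM_apply[where f = "\<lambda>x. x"]) simp

lemma gauss_weights_apply_measurable[measurable]:
  "(\<lambda>b. b j i) \<in> borel_measurable (gauss_weights m :: (nat \<Rightarrow> 'd::finite \<Rightarrow> real) measure)"
  by (intro borel_measurable_PiM_apply[where f = "\<lambda>x. x i"])
    (simp add: gauss_init_def borel_measurable_PiM_apply[where f = "\<lambda>x. x"])

lemma init_measure_sign_measurable[measurable]:
  "(\<lambda>w. fst w j) \<in> borel_measurable (init_measure m :: ((nat \<Rightarrow> real) \<times> (nat \<Rightarrow> 'd::finite \<Rightarrow> real)) measure)"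
  unfolding init_measure_def by measurable

lemma init_measure_weight_measurable[measurable]:
  "(\<lambda>w. snd w j i) \<in> borel_measurable (init_measure m :: ((nat \<Rightarrow> real) \<times> (nat \<Rightarrow> 'd::finite \<Rightarrow> real)) measure)"
  unfolding init_measure_def by measurable

lemma fnet_init_measurable[measurable]:
  "(\<lambda>w. fnet m (fst w) (snd w) v) \<in> borel_measurable (init_measure m)"
  unfolding fnet_def relu_def inner_d_def by measurable

lemma prob_space_init_measure: "prob_space (init_measure m)"
  unfolding init_measure_def
  by (intro prob_space_pair prob_space_PiM prob_space_measure_pmf prob_space_gauss_init)

lemma AE_init_measure_signs:
  "AE w in (init_measure m :: ((nat \<Rightarrow> real) \<times> (nat \<Rightarrow> 'd::finite \<Rightarrow> real)) measure).
     \<forall>j<m. fst w j \<in> {-1, 1}"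
proof -
  let ?G = "gauss_weights m :: (nat \<Rightarrow> 'd \<Rightarrow> real) measure"
  interpret prob_space ?G by (intro prob_space_PiM prob_space_gauss_init)
  have "AE u in sign_init m. \<forall>j\<in>{..<m}. u j \<in> {-1, 1}"
    by (intro eventually_ball_finite ballI AE_PiM_component)
      (auto simp: prob_space_measure_pmf AE_measure_pmf_iff)
  then have "AE u in distr (sign_init m \<Otimes>\<^sub>M ?G) (sign_init m) fst. \<forall>j\<in>{..<m}. u j \<in> {-1, 1}"
    by (simp only: distr_pair_fst)
  then have "AE w in sign_init m \<Otimes>\<^sub>M ?G. \<forall>j\<in>{..<m}. fst w j \<in> {-1, 1}"
    by (rule AE_distrD[OF measurable_fst])
  then show ?thesis unfolding init_measure_def by eventually_elim auto
qed

lemma nn_integral_fnet_init_sq_le: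
  fixes v :: "'d::finite \<Rightarrow> real"
  assumes v: "(\<Sum>i\<in>UNIV. (v i)\<^sup>2) \<le> 1"
  shows "(\<integral>\<^sup>+ w. ennreal ((fnet m (fst w) (snd w) v)\<^sup>2) \<partial>init_measure m) \<le> 1"
proof -
  let ?G = "gauss_weights m :: (nat \<Rightarrow> 'd \<Rightarrow> real) measure"
  interpret pair_sigma_finite "sign_init m" ?G
    by (intro pair_sigma_finite.intro prob_space_imp_sigma_finite prob_space_PiM
        prob_space_measure_pmf prob_space_gauss_init)
  define c where "c b j = relu (inner_d (b j) v) / sqrt (real m)" for b :: "nat \<Rightarrow> 'd \<Rightarrow> real" and j
  have c_sq: "(c b j)\<^sup>2 \<le> (\<Sum>i\<in>UNIV. (b j i)\<^sup>2 / real m)" for b j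
    using order_trans[OF relu_sq_le inner_d_sq_le[OF v]]
    by (simp add: c_def power_divide sum_divide_distrib[symmetric] divide_right_mono)
  have inner: "has_bochner_integral ?G (\<lambda>b. \<Sum>i\<in>UNIV. (b j i)\<^sup>2 / real m)
      (\<Sum>i\<in>(UNIV::'d set). 1 / real CARD('d) / real m)" if "j < m" for j
    by (intro has_bochner_integral_sum has_bochner_integral_divide_zero
        has_bochner_integral_gauss_weights_sq that)
  have weights: "has_bochner_integral ?G (\<lambda>b. \<Sum>j<m. \<Sum>i\<in>UNIV. (b j i)\<^sup>2 / real m)
      (\<Sum>j<m. \<Sum>i\<in>(UNIV::'d set). 1 / real CARD('d) / real m)"
    by (rule has_bochner_integral_sum, rule inner) simp
  have "(\<integral>\<^sup>+ w. ennreal ((fnet m (fst w) (snd w) v)\<^sup>2) \<partial>init_measure m)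
      = (\<integral>\<^sup>+ b. (\<integral>\<^sup>+ u. ennreal ((\<Sum>j<m. u j * c b j)\<^sup>2) \<partial>sign_init m) \<partial>?G)"
    using nn_integral_snd[of "\<lambda>w. ennreal ((fnet m (fst w) (snd w) v)\<^sup>2)"] fnet_init_measurable[of m v]
    unfolding init_measure_def by (simp add: fnet_def c_def sum_divide_distrib)
  also have "\<dots> = (\<integral>\<^sup>+ b. ennreal (\<Sum>j<m. (c b j)\<^sup>2) \<partial>?G)"
    by (simp add: nn_integral_sign_init_sum_sq)
  also have "\<dots> \<le> (\<integral>\<^sup>+ b. ennreal (\<Sum>j<m. \<Sum>i\<in>UNIV. (b j i)\<^sup>2 / real m) \<partial>?G)"
    by (intro nn_integral_mono ennreal_leI sum_mono c_sq)
  also have "\<dots> = ennreal (\<Sum>j<m. \<Sum>i\<in>(UNIV::'d set). 1 / real CARD('d) / real m)"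
    using weights by (subst nn_integral_eq_integral) (auto simp: has_bochner_integral_iff sum_nonneg)
  also have "\<dots> \<le> 1"
    by (cases "m = 0") simp_all
  finally show ?thesis .
qed

definition fnet_energy :: "('s::finite \<Rightarrow> 's \<Rightarrow> 'a::finite \<Rightarrow> 'd::finite \<Rightarrow> real) \<Rightarrow> nat
    \<Rightarrow> (nat \<Rightarrow> real) \<Rightarrow> (nat \<Rightarrow> 'd \<Rightarrow> real) \<Rightarrow> real" where
  "fnet_energy \<phi> m u b = (\<Sum>s\<in>UNIV. \<Sum>a\<in>UNIV. \<Sum>x\<in>UNIV. (fnet m u b (\<phi> s x a))\<^sup>2)"

lemma fnet_energy_nonneg: "0 \<le> fnet_energy \<phi> m u b"
  unfolding fnet_energy_def by (intro sum_nonneg) simp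

lemma sum_fnet_sq_le_energy: "(\<Sum>x\<in>UNIV. (fnet m u b (\<phi> s x a))\<^sup>2) \<le> fnet_energy \<phi> m u b"
proof -
  have "(\<Sum>x\<in>UNIV. (fnet m u b (\<phi> s x a))\<^sup>2) \<le> (\<Sum>a\<in>UNIV. \<Sum>x\<in>UNIV. (fnet m u b (\<phi> s x a))\<^sup>2)"
    by (rule member_le_sum[where f = "\<lambda>a. \<Sum>x\<in>UNIV. (fnet m u b (\<phi> s x a))\<^sup>2"]) (auto intro: sum_nonneg)
  also have "\<dots> \<le> fnet_energy \<phi> m u b"
    unfolding fnet_energy_def
    by (rule member_le_sum[where f = "\<lambda>s. \<Sum>a\<in>UNIV. \<Sum>x\<in>UNIV. (fnet m u b (\<phi> s x a))\<^sup>2"])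
      (auto intro!: sum_nonneg)
  finally show ?thesis .
qed

lemma nn_integral_fnet_energy_le:
  fixes \<phi> :: "'s::finite \<Rightarrow> 's \<Rightarrow> 'a::finite \<Rightarrow> 'd::finite \<Rightarrow> real"
  assumes feat: "\<And>s x a. (\<Sum>i\<in>UNIV. (\<phi> s x a i)\<^sup>2) \<le> 1"
  shows "(\<integral>\<^sup>+ w. ennreal (fnet_energy \<phi> m (fst w) (snd w)) \<partial>init_measure m)
    \<le> ennreal (real CARD('s) ^ 2 * real CARD('a))"
proof -
  let ?f = "\<lambda>s x a w. ennreal ((fnet m (fst w) (snd w) (\<phi> s x a))\<^sup>2)"
  have "(\<integral>\<^sup>+ w. ennreal (fnet_energy \<phi> m (fst w) (snd w)) \<partial>init_measure m)
      = (\<integral>\<^sup>+ w. (\<Sum>s\<in>UNIV. \<Sum>a\<in>UNIV. \<Sum>x\<in>UNIV. ?f s x a w) \<partial>init_measure m)"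
    by (simp add: fnet_energy_def sum_nonneg)
  also have "\<dots> = (\<Sum>s\<in>UNIV. \<integral>\<^sup>+ w. (\<Sum>a\<in>UNIV. \<Sum>x\<in>UNIV. ?f s x a w) \<partial>init_measure m)"
    by (rule nn_integral_sum) measurable
  also have "\<dots> = (\<Sum>s\<in>UNIV. \<Sum>a\<in>UNIV. \<integral>\<^sup>+ w. (\<Sum>x\<in>UNIV. ?f s x a w) \<partial>init_measure m)"
    by (intro sum.cong refl nn_integral_sum) measurable
  also have "\<dots> = (\<Sum>s\<in>UNIV. \<Sum>a\<in>UNIV. \<Sum>x\<in>UNIV. \<integral>\<^sup>+ w. ?f s x a w \<partial>init_measure m)"
    by (intro sum.cong refl nn_integral_sum) measurable
  also have "\<dots> \<le> (\<Sum>s\<in>(UNIV::'s set). \<Sum>a\<in>(UNIV::'a set). \<Sum>x\<in>(UNIV::'s set). 1)"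
    by (intro sum_mono nn_integral_fnet_init_sq_le feat)
  also have "\<dots> = ennreal (real CARD('s) ^ 2 * real CARD('a))"
    by (simp add: power2_eq_square ennreal_of_nat_eq_real_of_nat ennreal_mult[symmetric] mult_ac)
  finally show ?thesis .
qed

section \<open>The data distribution\<close>

lemma pred_in_simplex[measurable]: "Measurable.pred borel (in_simplex :: ('s::finite \<Rightarrow> real) \<Rightarrow> bool)"
  unfolding in_simplex_def by measurable

lemma pred_data_in_simplex[measurable]:
  "Measurable.pred (triple_space \<Otimes>\<^sub>M triple_space)
     (\<lambda>z::('s::finite \<times> ('s \<Rightarrow> real) \<times> 'a::finite) \<times> ('s \<times> ('s \<Rightarrow> real) \<times> 'a).
        in_simplex (fst (snd (fst z))) \<and> in_simplex (fst (snd (snd z))))"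
  unfolding triple_space_def by measurable

lemma data_kernel_measurable:
  fixes P :: "'s::finite \<times> ('s \<Rightarrow> real) \<times> 'a::finite \<Rightarrow> ('s \<times> ('s \<Rightarrow> real)) measure"
  assumes P_kernel: "P \<in> measurable triple_space (prob_algebra sd_space)"
    and pi_kernel: "\<pi> \<in> measurable sd_space (prob_algebra (count_space UNIV))"
  shows "(\<lambda>t. P t \<bind> (\<lambda>(s', d'). \<pi> (s', d') \<bind>
        (\<lambda>a'. return (triple_space \<Otimes>\<^sub>M triple_space) (t, (s', d', a')))))
     \<in> measurable triple_space (subprob_algebra (triple_space \<Otimes>\<^sub>M triple_space))"
proof -
  have P[measurable]: "P \<in> measurable triple_space (subprob_algebra sd_space)"
    using P_kernel by (rule measurable_prob_algebraD)
  have pi[measurable]: "\<pi> \<in> measurable sd_space (subprob_algebra (count_space UNIV))"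
    using pi_kernel by (rule measurable_prob_algebraD)
  show ?thesis
    unfolding triple_space_def sd_space_def
    apply (rule measurable_bind')
     apply (rule P[unfolded triple_space_def sd_space_def])
    apply (simp add: case_prod_beta')
    apply (rule measurable_bind')
     apply (rule measurable_compose[OF measurable_snd pi[unfolded sd_space_def]])
    apply measurable
    done
qed


lemma subprob_space_data_measure:
  fixes P :: "'s::finite \<times> ('s \<Rightarrow> real) \<times> 'a::finite \<Rightarrow> ('s \<times> ('s \<Rightarrow> real)) measure"
  assumes "prob_space \<rho>" and "sets \<rho> = sets triple_space"
    and "P \<in> measurable triple_space (prob_algebra sd_space)"
    and "\<pi> \<in> measurable sd_space (prob_algebra (count_space UNIV))"
  shows "subprob_space (data_measure \<rho> P \<pi>)"
  unfolding data_measure_def using assms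
  by (intro subprob_space_bind[where N = "triple_space \<Otimes>\<^sub>M triple_space"] prob_space_imp_subprob_space)
    (simp_all add: measurable_cong_sets[OF assms(2) refl] data_kernel_measurable)

lemma AE_data_measure_in_simplex:
  fixes P :: "'s::finite \<times> ('s \<Rightarrow> real) \<times> 'a::finite \<Rightarrow> ('s \<times> ('s \<Rightarrow> real)) measure"
  assumes rho_sets: "sets \<rho> = sets triple_space"
    and rho_simplex: "AE t in \<rho>. in_simplex (fst (snd t))"
    and P_kernel: "P \<in> measurable triple_space (prob_algebra sd_space)"
    and P_simplex: "\<And>t. t \<in> space triple_space \<Longrightarrow> AE y in P t. in_simplex (snd y)"
    and pi_kernel: "\<pi> \<in> measurable sd_space (prob_algebra (count_space UNIV))"
  shows "AE z in data_measure \<rho> P \<pi>. in_simplex (fst (snd (fst z))) \<and> in_simplex (fst (snd (snd z)))"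
proof -
  have P[measurable]: "P \<in> measurable triple_space (subprob_algebra sd_space)"
    using P_kernel by (rule measurable_prob_algebraD)
  have pi[measurable]: "\<pi> \<in> measurable sd_space (subprob_algebra (count_space UNIV))"
    using pi_kernel by (rule measurable_prob_algebraD)
  let ?ret = "\<lambda>t s' d' a'. return (triple_space \<Otimes>\<^sub>M triple_space) (t, (s', d', a'))"
  have K: "(\<lambda>t. P t \<bind> (\<lambda>(s', d'). \<pi> (s', d') \<bind> ?ret t s' d'))
      \<in> measurable \<rho> (subprob_algebra (triple_space \<Otimes>\<^sub>M triple_space))"
    using data_kernel_measurable[OF P_kernel pi_kernel] by (simp add: measurable_cong_sets[OF rho_sets refl])
  show ?thesis
    unfolding data_measure_def
    apply (subst AE_bind[OF K pred_data_in_simplex])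
    using rho_simplex
  proof eventually_elim
    case (elim t)
    have sP: "sets (P t) = sets sd_space"
      by (rule sets_kernel[OF P]) (simp add: triple_space_def space_pair_measure)
    have K2: "(\<lambda>(s', d'). \<pi> (s', d') \<bind> ?ret t s' d')
       \<in> measurable (P t) (subprob_algebra (triple_space \<Otimes>\<^sub>M triple_space))"
      unfolding measurable_cong_sets[OF sP refl]
      apply (simp add: case_prod_beta')
      apply (rule measurable_bind'[OF pi])
      unfolding triple_space_def sd_space_def
      apply measurable
      apply (simp add: space_pair_measure)
      apply (rule measurable_Pair)
       apply measurable
      done
    have "AE y in P t. in_simplex (snd y)"
      using P_simplex[of t] by (simp add: triple_space_def space_pair_measure)
    then have "AE y in P t. AE z in (\<lambda>(s', d'). \<pi> (s', d') \<bind> ?ret t s' d') y.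
       in_simplex (fst (snd (fst z))) \<and> in_simplex (fst (snd (snd z)))"
    proof eventually_elim
      case (elim y)
      obtain s' d' where y: "y = (s', d')" by (cases y)
      have sPi: "sets (\<pi> y) = sets (count_space UNIV)"
        by (rule sets_kernel[OF pi]) (simp add: sd_space_def space_pair_measure)
      have K3: "?ret t s' d' \<in> measurable (\<pi> y) (subprob_algebra (triple_space \<Otimes>\<^sub>M triple_space))"
        unfolding measurable_cong_sets[OF sPi refl] triple_space_def
        by measurable (auto simp: space_pair_measure measurable_count_space_eq1)
      show ?case
        unfolding y split
        using AE_bind[OF K3[unfolded y] pred_data_in_simplex] elim y \<open>in_simplex (fst (snd t))\<close>
        by (simp add: AE_return triple_space_def space_pair_measure)
    qed
    then show ?case by (subst AE_bind[OF K2 pred_data_in_simplex])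
  qed
qed

section \<open>Averaging over the initialization\<close>

lemma (in prob_space) nn_integral_affine_le:
  assumes f: "f \<in> borel_measurable M" "\<And>x. 0 \<le> f x"
    and bound: "(\<integral>\<^sup>+ x. ennreal (f x) \<partial>M) \<le> ennreal e"
    and nonneg: "0 \<le> a" "0 \<le> b" "0 \<le> e"
  shows "(\<integral>\<^sup>+ x. ennreal (a + b * f x) \<partial>M) \<le> ennreal (a + b * e)"
proof -
  have "(\<integral>\<^sup>+ x. ennreal (a + b * f x) \<partial>M) = ennreal a + ennreal b * (\<integral>\<^sup>+ x. ennreal (f x) \<partial>M)"
    using f nonneg by (simp add: ennreal_plus ennreal_mult nn_integral_add nn_integral_cmult emeasure_space_1)
  also have "\<dots> \<le> ennreal a + ennreal b * ennreal e"
    using bound by (intro add_left_mono mult_left_mono) auto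
  also have "\<dots> = ennreal (a + b * e)"
    using nonneg by (simp add: ennreal_plus ennreal_mult)
  finally show ?thesis .
qed

lemma nn_integral_centered_gvec_le_energy:
  fixes \<phi> :: "'s::finite \<Rightarrow> 's \<Rightarrow> 'a::finite \<Rightarrow> 'd::finite \<Rightarrow> real"
    and D :: "(('s \<times> ('s \<Rightarrow> real) \<times> 'a) \<times> ('s \<times> ('s \<Rightarrow> real) \<times> 'a)) measure"
  assumes feat: "\<And>s x a. (\<Sum>i\<in>UNIV. (\<phi> s x a i)\<^sup>2) \<le> 1"
    and D: "subprob_space D"
    and D_simplex: "AE z in D. in_simplex (fst (snd (fst z))) \<and> in_simplex (fst (snd (snd z)))"
    and xi: "\<And>s d a. in_simplex d \<Longrightarrow> (\<xi> (s, d, a))\<^sup>2 \<le> X" and X_nonneg: "0 \<le> X"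
    and mu: "\<bar>\<mu>\<bar> \<le> 1" and u: "\<forall>j<m. \<bar>u j\<bar> \<le> 1"
    and B: "par_sqnorm m (\<lambda>j i. B j i - b j i) \<le> R\<^sup>2"
  shows "(\<integral>\<^sup>+ z. ennreal (par_sqnorm m (\<lambda>j i.
              gvec \<phi> \<tau> \<mu> \<xi> m u B z j i - gbar \<phi> \<tau> \<mu> \<xi> m u B D j i)) \<partial>D)
    \<le> ennreal (12 * real CARD('d) * (4 * real CARD('s) * R\<^sup>2 + \<tau>\<^sup>2 * X)
               + 48 * real CARD('d) * fnet_energy \<phi> m u b)"
proof -
  define T where "T = 2 * fnet_energy \<phi> m u b + 2 * real CARD('s) * R\<^sup>2"
  have T: "(\<Sum>x\<in>UNIV. (fnet m u B (\<phi> s x a))\<^sup>2) \<le> T" for s a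
  proof -
    have "(fnet m u B (\<phi> s x a))\<^sup>2 \<le> 2 * (fnet m u b (\<phi> s x a))\<^sup>2 + 2 * R\<^sup>2" for x
      using fnet_sq_le_param_shift[OF u feat[of s x a], where B = B and b = b] B by linarith
    then have "(\<Sum>x\<in>UNIV. (fnet m u B (\<phi> s x a))\<^sup>2) \<le> (\<Sum>x\<in>UNIV. 2 * (fnet m u b (\<phi> s x a))\<^sup>2 + 2 * R\<^sup>2)"
      by (rule sum_mono)
    also have "\<dots> = 2 * (\<Sum>x\<in>UNIV. (fnet m u b (\<phi> s x a))\<^sup>2) + 2 * real CARD('s) * R\<^sup>2"
      by (simp add: sum.distrib sum_distrib_left)
    also have "\<dots> \<le> T"
      using sum_fnet_sq_le_energy[of m u b \<phi> s a] by (simp add: T_def)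
    finally show ?thesis .
  qed
  have "0 \<le> T" using fnet_energy_nonneg[of \<phi> m u b] by (simp add: T_def)
  with nn_integral_centered_gvec_le[where \<phi> = \<phi> and m = m and u = u and b = B and \<xi> = \<xi>,
      OF feat D D_simplex T _ xi X_nonneg mu u]
  show ?thesis by (simp add: T_def algebra_simps)
qed

lemma nn_integral_init_centered_gvec_le:
  fixes \<phi> :: "'s::finite \<Rightarrow> 's \<Rightarrow> 'a::finite \<Rightarrow> 'd::finite \<Rightarrow> real"
    and D :: "(('s \<times> ('s \<Rightarrow> real) \<times> 'a) \<times> ('s \<times> ('s \<Rightarrow> real) \<times> 'a)) measure"
    and B :: "(nat \<Rightarrow> real) \<times> (nat \<Rightarrow> 'd \<Rightarrow> real) \<Rightarrow> (nat \<Rightarrow> 'd \<Rightarrow> real)"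
  assumes feat: "\<And>s x a. (\<Sum>i\<in>UNIV. (\<phi> s x a i)\<^sup>2) \<le> 1"
    and D: "subprob_space D"
    and D_simplex: "AE z in D. in_simplex (fst (snd (fst z))) \<and> in_simplex (fst (snd (snd z)))"
    and taus_nonneg: "0 \<le> \<tau>\<^sub>2" "0 \<le> \<tau>\<^sub>3" and mu: "\<bar>\<mu>\<bar> \<le> 1" and R: "0 \<le> R"
    and xi: "\<And>s d a. in_simplex d \<Longrightarrow> (\<xi> (s, d, a))\<^sup>2 \<le> \<tau>\<^sub>2 * R\<^sup>2 + \<tau>\<^sub>3"
    and B_near: "\<And>w. w \<in> space (init_measure m) \<Longrightarrow> par_sqnorm m (\<lambda>j i. B w j i - snd w j i) \<le> R\<^sup>2"
  shows "(\<integral>\<^sup>+ w. (\<integral>\<^sup>+ z. ennreal (par_sqnorm m (\<lambda>j i.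
              gvec \<phi> \<tau> \<mu> \<xi> m (fst w) (B w) z j i - gbar \<phi> \<tau> \<mu> \<xi> m (fst w) (B w) D j i)) \<partial>D)
            \<partial>init_measure m)
    \<le> ennreal (12 * real CARD('d) * (4 * real CARD('s) + 4 * real CARD('s) ^ 2 * real CARD('a)
                 + \<tau>\<^sup>2 * (\<tau>\<^sub>2 + \<tau>\<^sub>3)) * (1 + R\<^sup>2))"
proof -
  define A where "A = 12 * real CARD('d) * (4 * real CARD('s) * R\<^sup>2 + \<tau>\<^sup>2 * (\<tau>\<^sub>2 * R\<^sup>2 + \<tau>\<^sub>3))"
  have "AE w in init_measure m.
      (\<integral>\<^sup>+ z. ennreal (par_sqnorm m (\<lambda>j i.
          gvec \<phi> \<tau> \<mu> \<xi> m (fst w) (B w) z j i - gbar \<phi> \<tau> \<mu> \<xi> m (fst w) (B w) D j i)) \<partial>D)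
      \<le> ennreal (A + 48 * real CARD('d) * fnet_energy \<phi> m (fst w) (snd w))"
    using AE_init_measure_signs AE_space
  proof eventually_elim
    case (elim w)
    with B_near taus_nonneg mu show ?case
      unfolding A_def
      by (intro nn_integral_centered_gvec_le_energy[where \<phi> = \<phi> and \<xi> = \<xi>, OF feat D D_simplex xi]) auto
  qed
  then have "(\<integral>\<^sup>+ w. (\<integral>\<^sup>+ z. ennreal (par_sqnorm m (\<lambda>j i.
          gvec \<phi> \<tau> \<mu> \<xi> m (fst w) (B w) z j i - gbar \<phi> \<tau> \<mu> \<xi> m (fst w) (B w) D j i)) \<partial>D)
        \<partial>init_measure m)
      \<le> (\<integral>\<^sup>+ w. ennreal (A + 48 * real CARD('d) * fnet_energy \<phi> m (fst w) (snd w)) \<partial>init_measure m)"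
    by (rule nn_integral_mono_AE)
  also have "\<dots> \<le> ennreal (A + 48 * real CARD('d) * (real CARD('s) ^ 2 * real CARD('a)))"
    using taus_nonneg
    by (intro prob_space.nn_integral_affine_le[OF prob_space_init_measure] nn_integral_fnet_energy_le feat
        fnet_energy_nonneg) (auto simp: A_def fnet_energy_def)
  also have "\<dots> \<le> ennreal (12 * real CARD('d) * (4 * real CARD('s) + 4 * real CARD('s) ^ 2 * real CARD('a)
                 + \<tau>\<^sup>2 * (\<tau>\<^sub>2 + \<tau>\<^sub>3)) * (1 + R\<^sup>2))"
    using taus_nonneg R by (intro ennreal_leI) (simp add: A_def algebra_simps mult_left_mono)
  finally show ?thesis .
qed

theorem lemma6:
  fixes \<phi> :: "'s::finite \<Rightarrow> 's \<Rightarrow> 'a::finite \<Rightarrow> 'd::finite \<Rightarrow> real"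
    and \<rho> :: "('s \<times> ('s \<Rightarrow> real) \<times> 'a) measure"
    and P :: "'s \<times> ('s \<Rightarrow> real) \<times> 'a \<Rightarrow> ('s \<times> ('s \<Rightarrow> real)) measure"
    and \<pi> :: "'s \<times> ('s \<Rightarrow> real) \<Rightarrow> 'a measure"
    and \<tau> \<mu> \<tau>\<^sub>1 \<tau>\<^sub>2 \<tau>\<^sub>3 :: real
  assumes feat_norm: "\<And>s x a. (\<Sum>i\<in>UNIV. (\<phi> s x a i)\<^sup>2) \<le> 1"
    and rho_prob: "prob_space \<rho>" and rho_sets: "sets \<rho> = sets triple_space"
    and rho_simplex: "AE t in \<rho>. in_simplex (fst (snd t))"
    and P_kernel: "P \<in> measurable triple_space (prob_algebra sd_space)"
    and P_simplex: "\<And>t. t \<in> space triple_space \<Longrightarrow> AE y in P t. in_simplex (snd y)"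
    and pi_kernel: "\<pi> \<in> measurable sd_space (prob_algebra (count_space UNIV))"
    and tau_nonneg: "\<tau> \<ge> 0" and mu_range: "0 \<le> \<mu>" "\<mu> < 1"
    and taus_nonneg: "\<tau>\<^sub>1 \<ge> 0" "\<tau>\<^sub>2 \<ge> 0" "\<tau>\<^sub>3 \<ge> 0"
  shows "\<exists>C::real. \<forall>(m::nat) (R::real) (\<xi>::'s \<times> ('s \<Rightarrow> real) \<times> 'a \<Rightarrow> real)
            (B::(nat \<Rightarrow> real) \<times> (nat \<Rightarrow> 'd \<Rightarrow> real) \<Rightarrow> (nat \<Rightarrow> 'd \<Rightarrow> real)).
      R \<ge> 0
      \<longrightarrow> \<xi> \<in> borel_measurable triple_space
      \<longrightarrow> (\<forall>u b0 s d a. (\<forall>j<m. u j \<in> {-1, 1}) \<longrightarrow> in_simplex d \<longrightarrow>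
             (\<xi> (s, d, a))\<^sup>2 \<le> \<tau>\<^sub>1 * (\<Sum>x\<in>UNIV. d x * (fnet m u b0 (\<phi> s x a))\<^sup>2)
                                + \<tau>\<^sub>2 * R\<^sup>2 + \<tau>\<^sub>3)
      \<longrightarrow> (\<forall>w\<in>space (init_measure m).
             sqrt (par_sqnorm m (\<lambda>j i. B w j i - snd w j i)) \<le> R)
      \<longrightarrow> (\<integral>\<^sup>+ w. (\<integral>\<^sup>+ z.
              ennreal (par_sqnorm m (\<lambda>j i.
                 gvec \<phi> \<tau> \<mu> \<xi> m (fst w) (B w) z j i
                 - gbar \<phi> \<tau> \<mu> \<xi> m (fst w) (B w) (data_measure \<rho> P \<pi>) j i))
            \<partial>(data_measure \<rho> P \<pi>)) \<partial>(init_measure m))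
          \<le> ennreal (C * (1 + R\<^sup>2))"
proof -
  have D: "subprob_space (data_measure \<rho> P \<pi>)"
    using rho_prob rho_sets P_kernel pi_kernel by (rule subprob_space_data_measure)
  have D_simplex:
    "AE z in data_measure \<rho> P \<pi>. in_simplex (fst (snd (fst z))) \<and> in_simplex (fst (snd (snd z)))"
    using rho_sets rho_simplex P_kernel P_simplex pi_kernel by (rule AE_data_measure_in_simplex)
  show ?thesis
  proof (intro exI allI impI,
      rule nn_integral_init_centered_gvec_le[OF feat_norm D D_simplex taus_nonneg(2,3)], goal_cases)
    case 1
    with mu_range show ?case by simp
  next
    case (2 m R \<xi> B)
    then show ?case by simp
  next
    case (3 m R \<xi> B s d a)
    \<comment> \<open>Assumption 4 at the zero network (u = 1, b0 = 0)\<close>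
    then show ?case
      using "3"(3)[rule_format, of "\<lambda>_. 1" d s a "\<lambda>_ _. 0"] by (simp add: fnet_def relu_def inner_d_def)
  next
    case (4 m R \<xi> B w)
    then show ?case by (blast intro: sqrt_le_D)
  qed
qed

end
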